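(* Let $Q^f$ be a kernel operator on $\mathcal{X}$ satisfying Assumptions 1, 2 and 3. Then $(Q^f)^3$ is a compact operator on $L^\infty_W(\mathcal{X})$.
   Context: $\mathcal{X}$ is a Polish space and $\mathcal{P}(\mathcal{X})$ denotes the set of probability measures on $\mathcal{X}$. A kernel operator $Q^f$ on $\mathcal{X}$ is a map such that for every $x\in\mathcal{X}$, $Q^f(x,\cdot)$ is a positive measure of finite mass, and for every measurable $A\subset\mathcal{X}$, $x\mapsto Q^f(x,A)$ is measurable; one writes $(Q^f\varphi)(x)=\int_{\mathcal{X}}\varphi(y)\,Q^f(x,dy)$, $\mu(\varphi)=\int\varphi\,d\mu$, and $\mathbb{1}$ for the constant function $1$. $(K_n)_{n\geq1}$ is a fixed increasing sequence of compact subsets of $\mathcal{X}$ such that every compact $K\subset\mathcal{X}$ is contained in some $K_m$. For $W:\mathcal{X}\to[1,+\infty)$, $L^\infty_W(\mathcal{X})$ is the Banach space of measurable $\varphi$ with $\|\varphi\|_{L^\infty_W}:=\sup_{x}|\varphi(x)|/W(x)<+\infty$. Assumption 1 (Lyapunov): there exist $W:\mathcal{X}\to[1,+\infty)$ bounded on compact sets and positive sequences $(\gamma_n)_{n\ge1}$, $(b_n)_{n\ge1}$ with $\gamma_n\to0$ such that for all $n\geq1$, $Q^fW\leq \gamma_n W+b_n\mathbb{1}_{K_n}$ pointwise. Assumption 2 (minorization and irreducibility): for each $n\geq1$ there exist $\eta_n\in\mathcal{P}(\mathcal{X})$ and $\alpha_n>0$ such that $Q^f(x,\cdot)\geq\alpha_n\eta_n(\cdot)$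 (as measures) for all $x\in K_n$; moreover, for any $n_0\geq1$ and any $\varphi\in L^\infty_W(\mathcal{X})$ with $\varphi\geq0$, if $\eta_n(\varphi)=0$ for all $n\geq n_0$, then $(Q^f\varphi)(x)=0$ for all $x\in\mathcal{X}$. Assumption 3 (local regularity): for every $n\geq1$ and every measurable function $\varphi$ bounded on $K_n$, the function $Q^f(\varphi\mathbb{1}_{K_n})$ is continuous on $K_n$. *)

theory Defs
  imports "HOL-Analysis.Analysis" "HOL-Probability.Probability"
begin

definition kernel_op :: "('a::topological_space \<Rightarrow> 'a measure) \<Rightarrow> bool" where
  "kernel_op Q \<longleftrightarrow>
     (\<forall>x. sets (Q x) = sets borel \<and> finite_measure (Q x)) \<and>
     (\<forall>A\<in>sets borel. (\<lambda>x. emeasure (Q x) A) \<in> borel_measurable borel)"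

definition kop :: "('a \<Rightarrow> 'a measure) \<Rightarrow> ('a \<Rightarrow> real) \<Rightarrow> 'a \<Rightarrow> real" where
  "kop Q \<phi> = (\<lambda>x. \<integral>y. \<phi> y \<partial>(Q x))"

definition LinfW :: "('a::topological_space \<Rightarrow> real) \<Rightarrow> ('a \<Rightarrow> real) set" where
  "LinfW W = {\<phi>. \<phi> \<in> borel_measurable borel \<and> (\<exists>C. \<forall>x. \<bar>\<phi> x\<bar> \<le> C * W x)}"

definition normW :: "('a \<Rightarrow> real) \<Rightarrow> ('a \<Rightarrow> real) \<Rightarrow> real" where
  "normW W \<phi> = (SUP x. \<bar>\<phi> x\<bar> / W x)"

definition compact_opW :: "('a::topological_space \<Rightarrow> real) \<Rightarrow> (('a \<Rightarrow> real) \<Rightarrow> ('a \<Rightarrow> real)) \<Rightarrow> bool" where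
  "compact_opW W T \<longleftrightarrow>
     (\<forall>\<phi>\<in>LinfW W. T \<phi> \<in> LinfW W) \<and>
     (\<forall>(f::nat \<Rightarrow> 'a \<Rightarrow> real) B. (\<forall>n. f n \<in> LinfW W \<and> normW W (f n) \<le> B) \<longrightarrow>
        (\<exists>r \<psi>. strict_mono r \<and> \<psi> \<in> LinfW W \<and>
           (\<lambda>n. normW W (T (f (r n)) - \<psi>)) \<longlonglongrightarrow> 0))"

end

theory Submission
  imports Defs
begin

text \<open>
  The Lyapunov bound makes \<open>Q\<close> bounded on \<open>L\<^sup>\<infinity>\<^sub>W\<close> and makes \<open>\<bar>Q f\<bar> \<le> \<gamma> m \<parallel>f\<parallel>\<^sub>W W\<close> outside \<open>K m\<close>.
  Irreducibility makes every \<open>Q(x, \<cdot>)\<close> absolutely continuous with respect to the mixture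
  \<open>\<nu>\<close> of the \<open>\<eta> n\<close> with weights \<open>2\<^sup>-\<^sup>n\<close>. The Borel sets of a second countable space have a countable
  generator, so a diagonal argument gives weak-* sequential compactness of the ball of \<open>L\<^sup>\<infinity>(\<nu>)\<close>, and
  pairing with the densities of the \<open>Q(x, \<cdot>)\<close> shows that every \<open>W\<close>-bounded sequence \<open>f\<^sub>k\<close> has a
  subsequence along which \<open>Q f\<^sub>k\<close> converges pointwise. A second application of \<open>Q\<close> preserves pointwise
  convergence (dominated convergence) and makes the tails outside \<open>K m\<close> uniformly of order \<open>\<gamma> m\<close>; on the
  compact \<open>K m\<close>, local regularity and a Dini-type argument make the third application converge
  uniformly. Together this is convergence in \<open>L\<^sup>\<infinity>\<^sub>W\<close>.
\<close>

section \<open>Sequences and uniform limits\<close>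

lemma convergent_if_uniformly_approximable:
  fixes a :: "nat \<Rightarrow> real"
  assumes approx: "\<And>\<epsilon>. \<epsilon> > 0 \<Longrightarrow> \<exists>b. convergent b \<and> (\<forall>k. \<bar>a k - b k\<bar> \<le> \<epsilon>)"
  shows "convergent a"
proof -
  have "Cauchy a"
  proof (rule metric_CauchyI)
    fix \<epsilon> :: real assume "\<epsilon> > 0"
    then obtain b where b: "convergent b" "\<And>k. \<bar>a k - b k\<bar> \<le> \<epsilon> / 3"
      using approx[of "\<epsilon> / 3"] by auto
    obtain N where N: "\<And>m n. m \<ge> N \<Longrightarrow> n \<ge> N \<Longrightarrow> dist (b m) (b n) < \<epsilon> / 3"
      using b(1) \<open>\<epsilon> > 0\<close> by (metis Cauchy_convergent_iff metric_CauchyD zero_less_divide_iff zero_less_numeral)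
    have "dist (a m) (a n) < \<epsilon>" if "m \<ge> N" "n \<ge> N" for m n
      using N[OF that] b(2)[of m] b(2)[of n] unfolding dist_real_def abs_le_iff abs_less_iff by linarith
    then show "\<exists>M. \<forall>m\<ge>M. \<forall>n\<ge>M. dist (a m) (a n) < \<epsilon>"
      by blast
  qed
  then show ?thesis
    by (simp add: Cauchy_convergent_iff)
qed

lemma diagonal_convergent_subseq:
  fixes a :: "nat \<Rightarrow> nat \<Rightarrow> real"
  assumes bounded: "\<And>n k. \<bar>a n k\<bar> \<le> C n"
  obtains d where "strict_mono d" "\<And>n. convergent (\<lambda>k. a n (d k))"
proof -
  interpret subseqs "\<lambda>n s. convergent (\<lambda>k. a n (s k))"
  proof
    fix n and s :: "nat \<Rightarrow> nat"
    have "\<And>k. a n (s k) \<in> {-C n..C n}"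
      using bounded by (simp add: abs_le_iff minus_le_iff)
    then obtain r l where "strict_mono r" "((\<lambda>k. a n (s k)) \<circ> r) \<longlonglongrightarrow> l"
      using compact_Icc[THEN compact_imp_seq_compact] by (metis seq_compactE)
    then show "\<exists>r. strict_mono r \<and> convergent (\<lambda>k. a n ((s \<circ> r) k))"
      by (auto simp: convergent_def comp_def)
  qed
  have "convergent (\<lambda>k. a n (diagseq k))" for n
  proof -
    have "convergent (\<lambda>k. a n ((diagseq \<circ> (+) (Suc n)) k))"
      by (rule diagseq_holds) (auto dest: convergent_subseq_convergent simp: comp_def)
    then have "convergent (\<lambda>k. a n (diagseq (k + Suc n)))"
      by (simp add: comp_def add.commute)
    then obtain L where "(\<lambda>k. a n (diagseq (k + Suc n))) \<longlonglongrightarrow> L"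
      unfolding convergent_def ..
    then have "(\<lambda>k. a n (diagseq k)) \<longlonglongrightarrow> L"
      by (rule LIMSEQ_offset)
    then show ?thesis
      by (rule convergentI)
  qed
  with subseq_diagseq show ?thesis
    by (rule that)
qed

lemma tail_SUP_abs_tendsto_zero:
  fixes u :: "nat \<Rightarrow> real"
  assumes "u \<longlonglongrightarrow> 0"
  shows "(\<lambda>N. SUP k\<in>{N..}. \<bar>u k\<bar>) \<longlonglongrightarrow> 0"
proof -
  obtain B where B: "\<And>k. \<bar>u k\<bar> \<le> B"
    using convergent_imp_Bseq[OF convergentI[OF assms]] unfolding Bseq_def by auto
  then have bdd: "bdd_above ((\<lambda>k. \<bar>u k\<bar>) ` {N..})" for N
    by (auto intro!: bdd_aboveI[of _ B])
  show ?thesis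
  proof (rule order_tendstoI)
    show "\<forall>\<^sub>F N in sequentially. a < (SUP k\<in>{N..}. \<bar>u k\<bar>)" if "a < 0" for a
    proof (intro always_eventually allI)
      fix N
      have "\<bar>u N\<bar> \<le> (SUP k\<in>{N..}. \<bar>u k\<bar>)"
        using bdd by (intro cSUP_upper) auto
      with that show "a < (SUP k\<in>{N..}. \<bar>u k\<bar>)"
        by linarith
    qed
    show "\<forall>\<^sub>F N in sequentially. (SUP k\<in>{N..}. \<bar>u k\<bar>) < a" if "0 < a" for a
    proof -
      obtain N0 where N0: "\<And>k. N0 \<le> k \<Longrightarrow> \<bar>u k\<bar> < a / 2"
        using order_tendstoD(2)[OF tendsto_rabs_zero[OF assms] half_gt_zero[OF \<open>0 < a\<close>]]
        by (auto simp: eventually_sequentially)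
      have "(SUP k\<in>{N..}. \<bar>u k\<bar>) \<le> a / 2" if "N0 \<le> N" for N
        using N0 that by (intro cSUP_least) (auto simp: less_imp_le)
      with \<open>0 < a\<close> have "\<forall>N\<ge>N0. (SUP k\<in>{N..}. \<bar>u k\<bar>) < a"
        by (smt (verit) field_sum_of_halves)
      then show ?thesis
        unfolding eventually_sequentially by blast
    qed
  qed
qed

lemma uniform_limit_if_dominated_by_continuous_null:
  fixes h u :: "nat \<Rightarrow> 'a::first_countable_topology \<Rightarrow> real"
  assumes S: "compact S"
    and h_cont: "\<And>N. continuous_on S (h N)"
    and h_lim: "\<And>x. x \<in> S \<Longrightarrow> (\<lambda>N. h N x) \<longlonglongrightarrow> 0"
    and dominated: "\<And>N k x. N \<le> k \<Longrightarrow> x \<in> S \<Longrightarrow> \<bar>u k x\<bar> \<le> h N x"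
  shows "uniform_limit S u (\<lambda>_. 0) sequentially"
  unfolding uniform_limit_iff
proof (intro allI impI)
  fix \<epsilon> :: real assume "\<epsilon> > 0"
  show "\<forall>\<^sub>F k in sequentially. \<forall>x\<in>S. dist (u k x) 0 < \<epsilon>"
  proof (rule ccontr)
    assume "\<not> ?thesis"
    then have "\<forall>N. \<exists>k\<ge>N. \<exists>x\<in>S. \<epsilon> \<le> \<bar>u k x\<bar>"
      by (auto simp: eventually_sequentially not_less)
    then obtain k x where k: "\<And>N. N \<le> k N" and x: "\<And>N. x N \<in> S"
      and large: "\<And>N. \<epsilon> \<le> \<bar>u (k N) (x N)\<bar>"
      by metis
    obtain l \<sigma> where l: "l \<in> S" "strict_mono \<sigma>" "(x \<circ> \<sigma>) \<longlonglongrightarrow> l"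
      using compact_imp_seq_compact[OF S] x by (metis seq_compactE)
    obtain N where N: "h N l < \<epsilon>"
      using order_tendstoD(2)[OF h_lim[OF l(1)] \<open>\<epsilon> > 0\<close>] by (auto simp: eventually_sequentially)
    have "(\<lambda>j. h N (x (\<sigma> j))) \<longlonglongrightarrow> h N l"
      using h_cont l x by (intro continuous_on_tendsto_compose[of S "h N"]) (auto simp: comp_def)
    from eventually_conj[OF order_tendstoD(2)[OF this N] eventually_ge_at_top[of N]]
    obtain j where j: "h N (x (\<sigma> j)) < \<epsilon>" "N \<le> j"
      unfolding eventually_sequentially by blast
    have "N \<le> k (\<sigma> j)"
      using j(2) seq_suble[OF l(2), of j] k[of "\<sigma> j"] by linarith
    then have "\<bar>u (k (\<sigma> j)) (x (\<sigma> j))\<bar> \<le> h N (x (\<sigma> j))"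
      using dominated x by blast
    with j(1) large[of "\<sigma> j"] show False
      by linarith
  qed
qed

section \<open>Weak-* sequential compactness of bounded sequences\<close>

lemma integrable_bounded_mult:
  fixes g u :: "'a \<Rightarrow> real"
  assumes g: "g \<in> borel_measurable M" "\<And>x. \<bar>g x\<bar> \<le> B" and u: "integrable M u"
  shows "integrable M (\<lambda>x. g x * u x)"
proof (rule Bochner_Integration.integrable_bound)
  show "integrable M (\<lambda>x. B * \<bar>u x\<bar>)"
    using u by simp
  show "AE x in M. norm (g x * u x) \<le> norm (B * \<bar>u x\<bar>)"
    using g(2) by (intro AE_I2) (auto simp: abs_mult intro!: mult_right_mono intro: order_trans[OF _ abs_ge_self])
qed (use g u in \<open>auto intro: borel_measurable_integrable\<close>)

lemma abs_integral_mult_diff_le: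
  fixes g u v :: "'a \<Rightarrow> real"
  assumes g: "g \<in> borel_measurable M" "\<And>x. \<bar>g x\<bar> \<le> B"
    and u: "integrable M u" and v: "integrable M v"
  shows "\<bar>(\<integral>x. g x * u x \<partial>M) - (\<integral>x. g x * v x \<partial>M)\<bar> \<le> B * (\<integral>x. \<bar>u x - v x\<bar> \<partial>M)"
proof -
  have "(\<integral>x. g x * u x \<partial>M) - (\<integral>x. g x * v x \<partial>M) = (\<integral>x. g x * (u x - v x) \<partial>M)"
    using integrable_bounded_mult[OF g u] integrable_bounded_mult[OF g v]
    by (simp add: right_diff_distrib)
  also have "\<bar>\<dots>\<bar> \<le> (\<integral>x. \<bar>g x * (u x - v x)\<bar> \<partial>M)"
    by (rule integral_abs_bound)
  also have "\<dots> \<le> (\<integral>x. B * \<bar>u x - v x\<bar> \<partial>M)"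
    using g u v
    by (intro integral_mono integrable_abs integrable_bounded_mult Bochner_Integration.integrable_diff)
       (auto simp: abs_mult intro: mult_right_mono)
  finally show ?thesis
    by simp
qed

lemma tendsto_L1_if_dominated:
  fixes u :: "nat \<Rightarrow> 'a \<Rightarrow> real"
  assumes meas: "\<And>i. u i \<in> borel_measurable M" "v \<in> borel_measurable M"
    and w: "integrable M w"
    and lim: "\<And>x. x \<in> space M \<Longrightarrow> (\<lambda>i. u i x) \<longlonglongrightarrow> v x"
    and dominated: "\<And>i x. x \<in> space M \<Longrightarrow> \<bar>u i x\<bar> \<le> w x"
  shows "(\<lambda>i. \<integral>x. \<bar>u i x - v x\<bar> \<partial>M) \<longlonglongrightarrow> 0"
proof -
  have v_le: "\<bar>v x\<bar> \<le> w x" if "x \<in> space M" for x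
    using dominated that by (intro LIMSEQ_le_const2[OF tendsto_rabs[OF lim]]) auto
  have "(\<lambda>i. \<integral>x. \<bar>u i x - v x\<bar> \<partial>M) \<longlonglongrightarrow> (\<integral>x. 0 \<partial>M)"
  proof (rule integral_dominated_convergence[where w="\<lambda>x. 2 * w x"])
    show "AE x in M. (\<lambda>i. \<bar>u i x - v x\<bar>) \<longlonglongrightarrow> 0"
      using lim by (intro AE_I2) (auto intro!: tendsto_rabs_zero LIM_zero)
    show "AE x in M. norm \<bar>u i x - v x\<bar> \<le> 2 * w x" for i
      using dominated v_le by (intro AE_I2) (smt (verit) real_norm_def)
  qed (use meas w in auto)
  then show ?thesis
    by simp
qed

lemma convergent_integral_mult_if_L1_limit:
  fixes g u :: "nat \<Rightarrow> 'a \<Rightarrow> real"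
  assumes g: "\<And>k. g k \<in> borel_measurable M" "\<And>k x. \<bar>g k x\<bar> \<le> B"
    and u: "\<And>i. integrable M (u i)" "integrable M v"
    and L1: "(\<lambda>i. \<integral>x. \<bar>u i x - v x\<bar> \<partial>M) \<longlonglongrightarrow> 0"
    and conv: "\<And>i. convergent (\<lambda>k. \<integral>x. g k x * u i x \<partial>M)"
  shows "convergent (\<lambda>k. \<integral>x. g k x * v x \<partial>M)"
proof (rule convergent_if_uniformly_approximable)
  fix \<epsilon> :: real assume "\<epsilon> > 0"
  from order_tendstoD(2)[OF tendsto_mult_right_zero[OF L1, of B] this]
  obtain i where i: "B * (\<integral>x. \<bar>u i x - v x\<bar> \<partial>M) < \<epsilon>"
    unfolding eventually_sequentially by blast
  have "\<bar>(\<integral>x. g k x * v x \<partial>M) - (\<integral>x. g k x * u i x \<partial>M)\<bar> \<le> \<epsilon>" for k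
    using abs_integral_mult_diff_le[OF g u(2) u(1), of k i] i by (simp add: abs_minus_commute)
  with conv show "\<exists>b. convergent b \<and> (\<forall>k. \<bar>(\<integral>x. g k x * v x \<partial>M) - b k\<bar> \<le> \<epsilon>)"
    by blast
qed

lemma convergent_integral_mult_integrable:
  fixes g :: "nat \<Rightarrow> 'a \<Rightarrow> real"
  assumes g: "\<And>k. g k \<in> borel_measurable M" "\<And>k x. \<bar>g k x\<bar> \<le> B"
    and conv_indicator: "\<And>A. A \<in> sets M \<Longrightarrow> emeasure M A < \<infinity> \<Longrightarrow>
      convergent (\<lambda>k. \<integral>x. g k x * indicator A x \<partial>M)"
    and u: "integrable M u"
  shows "convergent (\<lambda>k. \<integral>x. g k x * u x \<partial>M)"
  using u
proof (induction rule: integrable_induct)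
  case (base A c)
  have eq: "(\<lambda>k. \<integral>x. g k x * (indicator A x *\<^sub>R c) \<partial>M) = (\<lambda>k. c * (\<integral>x. g k x * indicator A x \<partial>M))"
    by (simp add: mult_ac)
  show ?case
    unfolding eq using conv_indicator[OF base] by (intro convergent_mult convergent_const)
next
  case (add f h)
  have "(\<lambda>k. \<integral>x. g k x * (f x + h x) \<partial>M) = (\<lambda>k. (\<integral>x. g k x * f x \<partial>M) + (\<integral>x. g k x * h x \<partial>M))"
    using integrable_bounded_mult[OF g add.hyps(1)] integrable_bounded_mult[OF g add.hyps(2)]
    by (simp add: distrib_left)
  with add.IH show ?case
    by (simp add: convergent_add)
next
  case (lim f s)
  show ?case
  proof (rule convergent_integral_mult_if_L1_limit[OF g lim.hyps(1) lim.hyps(4) _ lim.IH])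
    show "(\<lambda>i. \<integral>x. \<bar>s i x - f x\<bar> \<partial>M) \<longlonglongrightarrow> 0"
      using lim.hyps by (intro tendsto_L1_if_dominated[where w="\<lambda>x. 2 * norm (f x)"]) auto
  qed
qed

lemma countable_Int_stable_generator:
  obtains G :: "'a::second_countable_topology set set"
  where "countable G" "Int_stable G" "UNIV \<in> G" "sigma_sets UNIV G = sets borel"
proof -
  obtain B :: "'a set set" where B: "countable B" "topological_basis B"
    using ex_countable_basis by blast
  define G where "G = Inter ` {F. finite F \<and> F \<subseteq> B}"
  have "countable G"
    unfolding G_def by (intro countable_image countable_Collect_finite_subset B)
  moreover have "Int_stable G"
  proof (rule Int_stableI)
    fix a b assume "a \<in> G" "b \<in> G"
    then obtain F1 F2 where "a = \<Inter>F1" "b = \<Inter>F2" "finite F1" "F1 \<subseteq> B" "finite F2" "F2 \<subseteq> B"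
      unfolding G_def by auto
    then show "a \<inter> b \<in> G"
      unfolding G_def by (intro image_eqI[of _ _ "F1 \<union> F2"]) auto
  qed
  moreover have "UNIV \<in> G"
    unfolding G_def by (intro image_eqI[of _ _ "{}"]) auto
  moreover have "sigma_sets UNIV G = sets borel"
  proof
    have "G \<subseteq> sets borel"
      unfolding G_def using topological_basis_open[OF B(2)] by (auto intro!: borel_open open_Inter)
    then show "sigma_sets UNIV G \<subseteq> sets borel"
      using sets.sigma_algebra_axioms[of borel] by (intro sigma_algebra.sigma_sets_subset) auto
    have "sets borel = sets (sigma UNIV B)"
      using borel_eq_countable_basis[OF B] by (rule arg_cong)
    also have "\<dots> = sigma_sets UNIV B"
      by (rule sets_measure_of) simp
    also have "\<dots> \<subseteq> sigma_sets UNIV G"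
      unfolding G_def by (intro sigma_sets_mono') (auto intro!: image_eqI[of _ _ "{b}" for b])
    finally show "sets borel \<subseteq> sigma_sets UNIV G" .
  qed
  ultimately show ?thesis
    using that by blast
qed

context finite_measure
begin

lemma integrable_bounded_mult_indicator:
  fixes g :: "'a \<Rightarrow> real"
  assumes "g \<in> borel_measurable M" "\<And>x. \<bar>g x\<bar> \<le> B" "A \<in> sets M"
  shows "integrable M (\<lambda>x. g x * indicator A x)"
  using assms by (intro integrable_bounded_mult) (simp_all add: less_top[symmetric])

lemma abs_integral_mult_indicator_le:
  fixes g :: "'a \<Rightarrow> real"
  assumes g: "g \<in> borel_measurable M" "\<And>x. \<bar>g x\<bar> \<le> B" and A: "A \<in> sets M"
  shows "\<bar>\<integral>x. g x * indicator A x \<partial>M\<bar> \<le> B * measure M (space M)"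
proof -
  have "\<bar>(\<integral>x. g x * indicator A x \<partial>M) - (\<integral>x. g x * 0 \<partial>M)\<bar> \<le> B * (\<integral>x. \<bar>indicator A x - 0\<bar> \<partial>M)"
    using A by (intro abs_integral_mult_diff_le g) (auto simp: less_top[symmetric])
  also have "\<dots> = B * measure M A"
    using A by (simp add: less_top[symmetric])
  also have "\<dots> \<le> B * measure M (space M)"
    using A g(2)[of undefined] by (intro mult_left_mono bounded_measure) auto
  finally show ?thesis
    by simp
qed

lemma convergent_integral_mult_indicator_compl:
  fixes g :: "nat \<Rightarrow> 'a \<Rightarrow> real"
  assumes g: "\<And>k. g k \<in> borel_measurable M" "\<And>k x. \<bar>g k x\<bar> \<le> B" and A: "A \<in> sets M"
    and conv_space: "convergent (\<lambda>k. \<integral>x. g k x * indicator (space M) x \<partial>M)"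
    and conv_A: "convergent (\<lambda>k. \<integral>x. g k x * indicator A x \<partial>M)"
  shows "convergent (\<lambda>k. \<integral>x. g k x * indicator (space M - A) x \<partial>M)"
proof -
  have "(\<lambda>k. \<integral>x. g k x * indicator (space M - A) x \<partial>M)
      = (\<lambda>k. \<integral>x. g k x * indicator (space M) x - g k x * indicator A x \<partial>M)"
    using sets.sets_into_space[OF A] by (intro ext Bochner_Integration.integral_cong) (auto split: split_indicator)
  also have "\<dots> = (\<lambda>k. (\<integral>x. g k x * indicator (space M) x \<partial>M) - (\<integral>x. g k x * indicator A x \<partial>M))"
    using A g by (intro ext Bochner_Integration.integral_diff integrable_bounded_mult_indicator) auto
  finally show ?thesis
    using conv_space conv_A by (simp only: convergent_diff)
qed

lemma convergent_integral_mult_indicator_disjoint_UN: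
  fixes g :: "nat \<Rightarrow> 'a \<Rightarrow> real" and A :: "nat \<Rightarrow> 'a set"
  assumes g: "\<And>k. g k \<in> borel_measurable M" "\<And>k x. \<bar>g k x\<bar> \<le> B"
    and A: "disjoint_family A" "\<And>i. A i \<in> sets M"
    and conv_A: "\<And>i. convergent (\<lambda>k. \<integral>x. g k x * indicator (A i) x \<partial>M)"
  shows "convergent (\<lambda>k. \<integral>x. g k x * indicator (\<Union>i. A i) x \<partial>M)"
proof (rule convergent_integral_mult_if_L1_limit[OF g])
  show "convergent (\<lambda>k. \<integral>x. g k x * indicator (\<Union>i<N. A i) x \<partial>M)" for N
  proof -
    have "indicator (\<Union>i<N. A i) x = (\<Sum>i<N. indicator (A i) x :: real)" for x
      using A(1) by (intro indicator_UN_disjoint) (auto simp: disjoint_family_on_def)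
    then have "(\<lambda>k. \<integral>x. g k x * indicator (\<Union>i<N. A i) x \<partial>M) = (\<lambda>k. \<integral>x. (\<Sum>i<N. g k x * indicator (A i) x) \<partial>M)"
      by (simp only: sum_distrib_left)
    also have "\<dots> = (\<lambda>k. \<Sum>i<N. \<integral>x. g k x * indicator (A i) x \<partial>M)"
      using A(2) g by (intro ext Bochner_Integration.integral_sum integrable_bounded_mult_indicator) auto
    finally show ?thesis
      using conv_A by (simp only: convergent_sum)
  qed
  show "(\<lambda>N. \<integral>x. \<bar>indicator (\<Union>i<N. A i) x - indicator (\<Union>i. A i) x :: real\<bar> \<partial>M) \<longlonglongrightarrow> 0"
  proof (rule tendsto_L1_if_dominated[where w="\<lambda>_. 1"])
    show "(\<lambda>N. indicator (\<Union>i<N. A i) x :: real) \<longlonglongrightarrow> indicator (\<Union>i. A i) x" for x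
      by (rule LIMSEQ_indicator_UN)
    show "\<bar>indicator (\<Union>i<N. A i) x :: real\<bar> \<le> 1" for N x
      by (simp add: indicator_def)
  qed (use A(2) in auto)
qed (use A(2) in \<open>auto simp: less_top[symmetric]\<close>)

lemma convergent_integral_mult_indicator:
  fixes g :: "nat \<Rightarrow> 'a \<Rightarrow> real" and G :: "'a set set"
  assumes g: "\<And>k. g k \<in> borel_measurable M" "\<And>k x. \<bar>g k x\<bar> \<le> B"
    and G: "Int_stable G" "G \<subseteq> Pow (space M)" "space M \<in> G" "sets M = sigma_sets (space M) G"
    and conv_G: "\<And>A. A \<in> G \<Longrightarrow> convergent (\<lambda>k. \<integral>x. g k x * indicator A x \<partial>M)"
    and A: "A \<in> sets M"
  shows "convergent (\<lambda>k. \<integral>x. g k x * indicator A x \<partial>M)"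
  using G(1,2) A[unfolded G(4)]
proof (induction rule: sigma_sets_induct_disjoint)
  case (basic A)
  then show ?case
    by (rule conv_G)
next
  case empty
  then show ?case
    by (simp add: convergent_const)
next
  case (compl A)
  then show ?case
    using G(4) by (intro convergent_integral_mult_indicator_compl[OF g _ conv_G[OF G(3)]]) auto
next
  case (union A)
  then show ?case
    using G(4) by (intro convergent_integral_mult_indicator_disjoint_UN[OF g]) auto
qed

end

text \<open>Diagonal argument over a countable \<open>\<inter>\<close>-stable generator of the Borel sets, then extension to all
  Borel sets by Dynkin's lemma and to \<open>L\<^sup>1\<close> by approximation with simple functions.\<close>
lemma weak_star_convergent_subseq:
  fixes M :: "'a::second_countable_topology measure" and g :: "nat \<Rightarrow> 'a \<Rightarrow> real"
  assumes "finite_measure M" and sets_M: "sets M = sets borel"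
    and g: "\<And>k. g k \<in> borel_measurable borel" "\<And>k x. \<bar>g k x\<bar> \<le> B"
  obtains r where "strict_mono r" "\<And>u. integrable M u \<Longrightarrow> convergent (\<lambda>k. \<integral>x. g (r k) x * u x \<partial>M)"
proof -
  interpret finite_measure M
    by fact
  have space_M: "space M = UNIV"
    using sets_eq_imp_space_eq[OF sets_M] by simp
  have g_M: "g k \<in> borel_measurable M" for k
    using g(1) by (simp add: measurable_cong_sets[OF sets_M refl])
  obtain G :: "'a set set" where G: "countable G" "Int_stable G" "UNIV \<in> G" "sigma_sets UNIV G = sets borel"
    by (rule countable_Int_stable_generator)
  define A where "A = from_nat_into G"
  have range_A: "range A = G"
    unfolding A_def using G(1,3) by (intro range_from_nat_into) auto
  have G_M: "Int_stable G" "G \<subseteq> Pow (space M)" "space M \<in> G" "sets M = sigma_sets (space M) G"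
    using G sets_M space_M by auto
  define a where "a n k = (\<integral>x. g k x * indicator (A n) x \<partial>M)" for n k
  have "\<bar>a n k\<bar> \<le> B * measure M (space M)" for n k
    unfolding a_def using G_M(4) range_A by (intro abs_integral_mult_indicator_le g_M g(2)) auto
  then obtain d where d: "strict_mono d" "\<And>n. convergent (\<lambda>k. a n (d k))"
    using diagonal_convergent_subseq[of a "\<lambda>_. B * measure M (space M)"] by blast
  have conv_G: "convergent (\<lambda>k. \<integral>x. g (d k) x * indicator X x \<partial>M)" if X: "X \<in> G" for X
  proof -
    obtain n where "X = A n"
      using X range_A by blast
    with d(2)[of n] show ?thesis
      by (simp add: a_def)
  qed
  have "convergent (\<lambda>k. \<integral>x. g (d k) x * u x \<partial>M)" if "integrable M u" for u
    using convergent_integral_mult_indicator[OF g_M g(2) G_M conv_G] that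
    by (rule convergent_integral_mult_integrable[OF g_M g(2)])
  with d(1) show ?thesis
    by (rule that)
qed

section \<open>Kernels with a Lyapunov function\<close>

text \<open>The mixture of the \<open>\<eta> n\<close>, \<open>n \<ge> 1\<close>, with weights \<open>2\<^sup>-\<^sup>n\<close>: the geometric distribution with
  parameter \<open>1/2\<close> has mass \<open>2\<^sup>-\<^sup>m\<^sup>-\<^sup>1\<close> at \<open>m\<close>.\<close>
definition geometric_mixture :: "(nat \<Rightarrow> 'a measure) \<Rightarrow> 'a measure" where
  "geometric_mixture \<eta> = measure_pmf (geometric_pmf (1/2)) \<bind> (\<lambda>n. \<eta> (Suc n))"

context
  fixes \<eta> :: "nat \<Rightarrow> 'a measure" and M :: "'a measure"
  assumes prob_space_\<eta>: "\<And>n. n \<ge> 1 \<Longrightarrow> prob_space (\<eta> n)"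
    and sets_\<eta>: "\<And>n. n \<ge> 1 \<Longrightarrow> sets (\<eta> n) = sets M"
begin

lemma measurable_geometric_mixture_components:
  "(\<lambda>n. \<eta> (Suc n)) \<in> measure_pmf (geometric_pmf (1/2)) \<rightarrow>\<^sub>M subprob_algebra M"
  using prob_space_\<eta> sets_\<eta> by (auto simp: space_subprob_algebra prob_space_imp_subprob_space)

lemma sets_geometric_mixture: "sets (geometric_mixture \<eta>) = sets M"
  unfolding geometric_mixture_def using sets_\<eta> by (intro sets_bind) auto

lemma finite_measure_geometric_mixture: "finite_measure (geometric_mixture \<eta>)"
proof -
  have "subprob_space (geometric_mixture \<eta>)"
    unfolding geometric_mixture_def
    by (rule subprob_space_bind[OF _ measurable_geometric_mixture_components]) (simp add: subprob_space_measure_pmf)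
  then show ?thesis
    by (simp add: subprob_space_def)
qed

lemma emeasure_geometric_mixture_eq_0D:
  assumes "A \<in> sets M" "emeasure (geometric_mixture \<eta>) A = 0" "n \<ge> 1"
  shows "emeasure (\<eta> n) A = 0"
proof -
  have "(\<integral>\<^sup>+m. emeasure (\<eta> (Suc m)) A \<partial>measure_pmf (geometric_pmf (1/2))) = 0"
    using assms emeasure_bind[OF _ measurable_geometric_mixture_components, of A]
    unfolding geometric_mixture_def by simp
  then have "AE m in measure_pmf (geometric_pmf (1/2)). emeasure (\<eta> (Suc m)) A = 0"
    by (subst (asm) nn_integral_0_iff_AE) auto
  then show ?thesis
    using \<open>n \<ge> 1\<close> by (auto simp: AE_measure_pmf_iff set_pmf_geometric Suc_le_eq gr0_conv_Suc)
qed

end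

lemma abs_le_normW:
  assumes W: "\<And>x. 0 < W x" and \<phi>: "\<phi> \<in> LinfW W"
  shows "\<bar>\<phi> x\<bar> \<le> normW W \<phi> * W x"
proof -
  obtain C where "\<And>y. \<bar>\<phi> y\<bar> \<le> C * W y"
    using \<phi> unfolding LinfW_def by blast
  then have "bdd_above (range (\<lambda>y. \<bar>\<phi> y\<bar> / W y))"
    using W by (intro bdd_aboveI[of _ C]) (auto simp: pos_divide_le_eq)
  then have "\<bar>\<phi> x\<bar> / W x \<le> normW W \<phi>"
    unfolding normW_def by (rule cSUP_upper[OF UNIV_I])
  then show ?thesis
    using W[of x] by (simp add: pos_divide_le_eq)
qed

lemma normW_tendsto_zeroI:
  assumes W: "\<And>x. 0 < W x"
    and small: "\<And>\<epsilon>. \<epsilon> > 0 \<Longrightarrow> \<forall>\<^sub>F n in sequentially. \<forall>x. \<bar>\<phi> n x\<bar> \<le> \<epsilon> * W x"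
  shows "(\<lambda>n. normW W (\<phi> n)) \<longlonglongrightarrow> 0"
proof -
  have normW_le: "0 \<le> normW W \<psi> \<and> normW W \<psi> \<le> \<epsilon>" if "\<forall>x. \<bar>\<psi> x\<bar> \<le> \<epsilon> * W x" for \<psi> \<epsilon>
  proof
    have le: "\<bar>\<psi> x\<bar> / W x \<le> \<epsilon>" for x
      using that W[of x] by (simp add: pos_divide_le_eq)
    have "\<bar>\<psi> undefined\<bar> / W undefined \<le> normW W \<psi>"
      unfolding normW_def using le by (intro cSUP_upper bdd_aboveI[of _ \<epsilon>]) auto
    then show "0 \<le> normW W \<psi>"
      using W[of undefined] by (meson abs_ge_zero divide_nonneg_pos order_trans)
    show "normW W \<psi> \<le> \<epsilon>"
      unfolding normW_def using le by (intro cSUP_least) auto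
  qed
  show ?thesis
  proof (rule order_tendstoI)
    show "\<forall>\<^sub>F n in sequentially. a < normW W (\<phi> n)" if "a < 0" for a
    proof (rule eventually_mono[OF small[of 1]])
      show "a < normW W (\<phi> n)" if "\<forall>x. \<bar>\<phi> n x\<bar> \<le> 1 * W x" for n
        using normW_le[OF that] \<open>a < 0\<close> by linarith
    qed simp
    show "\<forall>\<^sub>F n in sequentially. normW W (\<phi> n) < a" if "0 < a" for a
    proof (rule eventually_mono[OF small[of "a / 2"]])
      show "normW W (\<phi> n) < a" if "\<forall>x. \<bar>\<phi> n x\<bar> \<le> a / 2 * W x" for n
        using normW_le[OF that] \<open>0 < a\<close> by linarith
    qed (use that in simp)
  qed
qed

locale W_kernel =
  fixes Q :: "'a::topological_space \<Rightarrow> 'a measure" and W :: "'a \<Rightarrow> real" and c :: real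
  assumes kernel: "kernel_op Q"
    and W_ge_1: "\<And>x. 1 \<le> W x"
    and borel_measurable_W [measurable]: "W \<in> borel_measurable borel"
    and c_nonneg: "0 \<le> c"
    and nn_integral_W_le: "\<And>x. (\<integral>\<^sup>+y. W y \<partial>Q x) \<le> ennreal (c * W x)"
begin

lemma sets_Q [simp, measurable_cong]: "sets (Q x) = sets borel"
  using kernel unfolding kernel_op_def by auto

lemma space_Q [simp]: "space (Q x) = UNIV"
  using sets_eq_imp_space_eq[OF sets_Q] by simp

lemma finite_measure_Q: "finite_measure (Q x)"
  using kernel unfolding kernel_op_def by auto

lemma W_pos: "0 < W x"
  using W_ge_1[of x] by simp

lemma nonneg_if_abs_le_W:
  assumes "\<And>y. \<bar>f y\<bar> \<le> C * W y"
  shows "0 \<le> C"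
proof -
  have "0 \<le> C * W undefined"
    using assms[of undefined] abs_ge_zero order_trans by blast
  then show ?thesis
    using W_pos[of undefined] by (simp add: zero_le_mult_iff)
qed

lemma borel_measurable_nn_integral_Q:
  fixes f :: "'a \<Rightarrow> ennreal"
  assumes "f \<in> borel_measurable borel"
  shows "(\<lambda>x. \<integral>\<^sup>+y. f y \<partial>Q x) \<in> borel_measurable borel"
  using assms
proof induct
  case (cong f g)
  then have "(\<lambda>x. \<integral>\<^sup>+y. f y \<partial>Q x) = (\<lambda>x. \<integral>\<^sup>+y. g y \<partial>Q x)"
    by (intro ext nn_integral_cong) auto
  with cong show ?case
    by simp
next
  case (set A)
  then have "(\<lambda>x. \<integral>\<^sup>+y. indicator A y \<partial>Q x) = (\<lambda>x. emeasure (Q x) A)"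
    by (intro ext nn_integral_indicator) simp
  with set kernel show ?case
    unfolding kernel_op_def by simp
next
  case (mult f c)
  then have "(\<lambda>x. \<integral>\<^sup>+y. c * f y \<partial>Q x) = (\<lambda>x. c * \<integral>\<^sup>+y. f y \<partial>Q x)"
    by (intro ext nn_integral_cmult) auto
  with mult show ?case
    by simp
next
  case (add f g)
  then have "(\<lambda>x. \<integral>\<^sup>+y. g y + f y \<partial>Q x) = (\<lambda>x. (\<integral>\<^sup>+y. g y \<partial>Q x) + (\<integral>\<^sup>+y. f y \<partial>Q x))"
    by (intro ext nn_integral_add) auto
  with add show ?case
    by simp
next
  case (seq F)
  then have "(\<lambda>x. \<integral>\<^sup>+y. (SUP i. F i) y \<partial>Q x) = (\<lambda>x. SUP i. (\<integral>\<^sup>+y. F i y \<partial>Q x))"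
    unfolding SUP_apply by (intro ext nn_integral_monotone_convergence_SUP) auto
  with seq show ?case
    by simp
qed

lemma integrable_W: "integrable (Q x) W"
proof -
  interpret finite_measure "Q x"
    by (rule finite_measure_Q)
  show ?thesis
    using le_less_trans[OF nn_integral_W_le ennreal_less_top] W_pos
    by (intro integrableI_nonneg) (auto simp: less_imp_le)
qed

lemma integrable_Q:
  assumes "f \<in> borel_measurable borel" "\<And>y. \<bar>f y\<bar> \<le> C * W y"
  shows "integrable (Q x) f"
proof (rule Bochner_Integration.integrable_bound)
  show "integrable (Q x) (\<lambda>y. C * W y)"
    using integrable_W by simp
  show "AE y in Q x. norm (f y) \<le> norm (C * W y)"
    using assms(2) by (intro AE_I2) (metis abs_ge_self order_trans real_norm_def)
qed (use assms(1) in simp)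

lemma kop_W_le_if_nn_integral_le:
  assumes "(\<integral>\<^sup>+y. W y \<partial>Q x) \<le> ennreal t" "0 \<le> t"
  shows "kop Q W x \<le> t"
proof -
  have "ennreal (kop Q W x) = (\<integral>\<^sup>+y. W y \<partial>Q x)"
    unfolding kop_def using integrable_W W_pos by (intro nn_integral_eq_integral[symmetric]) (auto intro: less_imp_le)
  with assms show ?thesis
    by (metis ennreal_le_iff)
qed

lemma kop_W_le: "kop Q W x \<le> c * W x"
  using nn_integral_W_le c_nonneg W_pos by (intro kop_W_le_if_nn_integral_le) (simp_all add: less_imp_le)

lemma abs_kop_le_kop:
  assumes f: "f \<in> borel_measurable borel"
    and g: "g \<in> borel_measurable borel" "\<And>y. \<bar>g y\<bar> \<le> C * W y"
    and f_le: "\<And>y. \<bar>f y\<bar> \<le> g y"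
  shows "\<bar>kop Q f x\<bar> \<le> kop Q g x"
proof -
  have "\<bar>f y\<bar> \<le> C * W y" for y
    using f_le[of y] g(2)[of y] abs_ge_self[of "g y"] by linarith
  then have "integrable (Q x) f"
    using f by (rule integrable_Q[rotated])
  have "\<bar>kop Q f x\<bar> \<le> (\<integral>y. \<bar>f y\<bar> \<partial>Q x)"
    unfolding kop_def by (rule integral_abs_bound)
  also have "\<dots> \<le> kop Q g x"
    unfolding kop_def using \<open>integrable (Q x) f\<close> integrable_Q[OF g] f_le
    by (intro integral_mono) auto
  finally show ?thesis .
qed

lemma abs_kop_le:
  assumes "f \<in> borel_measurable borel" "\<And>y. \<bar>f y\<bar> \<le> C * W y"
  shows "\<bar>kop Q f x\<bar> \<le> C * kop Q W x"
proof -
  have "\<bar>kop Q f x\<bar> \<le> kop Q (\<lambda>y. C * W y) x"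
    using assms nonneg_if_abs_le_W[OF assms(2)] W_pos
    by (intro abs_kop_le_kop[where C=C]) (auto simp: abs_mult abs_of_pos)
  then show ?thesis
    by (simp add: kop_def)
qed

lemma abs_kop_le_W:
  assumes "f \<in> borel_measurable borel" "\<And>y. \<bar>f y\<bar> \<le> C * W y"
  shows "\<bar>kop Q f x\<bar> \<le> C * c * W x"
proof -
  have "\<bar>kop Q f x\<bar> \<le> C * kop Q W x"
    by (rule abs_kop_le[OF assms])
  also have "\<dots> \<le> C * (c * W x)"
    using kop_W_le nonneg_if_abs_le_W[OF assms(2)] by (rule mult_left_mono)
  finally show ?thesis
    by (simp add: mult.assoc)
qed

lemma borel_measurable_kop:
  assumes f: "f \<in> borel_measurable borel" "\<And>y. \<bar>f y\<bar> \<le> C * W y"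
  shows "kop Q f \<in> borel_measurable borel"
proof -
  have eq: "kop Q f = (\<lambda>x. enn2real (\<integral>\<^sup>+y. f y \<partial>Q x) - enn2real (\<integral>\<^sup>+y. ennreal (- f y) \<partial>Q x))"
    unfolding kop_def by (intro ext real_lebesgue_integral_def integrable_Q[OF f])
  have "(\<lambda>x. \<integral>\<^sup>+y. f y \<partial>Q x) \<in> borel_measurable borel" "(\<lambda>x. \<integral>\<^sup>+y. ennreal (- f y) \<partial>Q x) \<in> borel_measurable borel"
    using f(1) by (auto intro!: borel_measurable_nn_integral_Q)
  then show ?thesis
    unfolding eq by (intro borel_measurable_diff borel_measurable_enn2real)
qed

lemma kop_LinfW:
  assumes "\<phi> \<in> LinfW W"
  shows "kop Q \<phi> \<in> LinfW W"
proof -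
  obtain C where \<phi>: "\<phi> \<in> borel_measurable borel" "\<And>y. \<bar>\<phi> y\<bar> \<le> C * W y"
    using assms unfolding LinfW_def by blast
  show ?thesis
    unfolding LinfW_def using borel_measurable_kop[OF \<phi>] abs_kop_le_W[OF \<phi>] by blast
qed

lemma kop_diff:
  assumes "f \<in> borel_measurable borel" "\<And>y. \<bar>f y\<bar> \<le> C * W y"
    and "g \<in> borel_measurable borel" "\<And>y. \<bar>g y\<bar> \<le> D * W y"
  shows "kop Q (\<lambda>y. f y - g y) x = kop Q f x - kop Q g x"
  unfolding kop_def using integrable_Q[OF assms(1,2)] integrable_Q[OF assms(3,4)] by simp

lemma kop_add:
  assumes "f \<in> borel_measurable borel" "\<And>y. \<bar>f y\<bar> \<le> C * W y"
    and "g \<in> borel_measurable borel" "\<And>y. \<bar>g y\<bar> \<le> D * W y"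
  shows "kop Q (\<lambda>y. f y + g y) x = kop Q f x + kop Q g x"
  unfolding kop_def using integrable_Q[OF assms(1,2)] integrable_Q[OF assms(3,4)] by simp

lemma kop_tendsto:
  assumes F: "\<And>k. F k \<in> borel_measurable borel" "\<And>k y. \<bar>F k y\<bar> \<le> C * W y"
    and f: "f \<in> borel_measurable borel" and lim: "\<And>y. (\<lambda>k. F k y) \<longlonglongrightarrow> f y"
  shows "(\<lambda>k. kop Q (F k) x) \<longlonglongrightarrow> kop Q f x"
  unfolding kop_def
  using F f lim integrable_W[of x]
  by (intro integral_dominated_convergence[where w="\<lambda>y. C * W y"]) auto

lemma absolutely_continuous_geometric_mixture:
  assumes \<eta>: "\<And>n. n \<ge> 1 \<Longrightarrow> prob_space (\<eta> n)" "\<And>n. n \<ge> 1 \<Longrightarrow> sets (\<eta> n) = sets borel"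
    and irreducible: "\<And>\<phi>. \<phi> \<in> LinfW W \<Longrightarrow> (\<forall>x. 0 \<le> \<phi> x) \<Longrightarrow>
      (\<forall>n\<ge>1. (\<integral>\<^sup>+y. ennreal (\<phi> y) \<partial>\<eta> n) = 0) \<Longrightarrow> \<forall>x. kop Q \<phi> x = 0"
  shows "absolutely_continuous (geometric_mixture \<eta>) (Q x)"
  unfolding absolutely_continuous_def
proof
  fix A assume "A \<in> null_sets (geometric_mixture \<eta>)"
  then have A: "A \<in> sets borel" "emeasure (geometric_mixture \<eta>) A = 0"
    using sets_geometric_mixture[OF \<eta>] by auto
  have "indicator A \<in> LinfW W"
    unfolding LinfW_def using A(1) W_ge_1
    by (intro CollectI conjI exI[of _ 1] allI borel_measurable_indicator) (simp_all add: indicator_def W_pos less_imp_le)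
  moreover have "(\<integral>\<^sup>+y. ennreal (indicator A y) \<partial>\<eta> n) = 0" if "n \<ge> 1" for n
    using A emeasure_geometric_mixture_eq_0D[OF \<eta> A that] \<eta>(2)[OF that]
    by (simp add: ennreal_indicator nn_integral_indicator)
  ultimately have "kop Q (indicator A) x = 0"
    using irreducible[of "indicator A"] by simp
  then have "measure (Q x) A = 0"
    unfolding kop_def by simp
  then have "emeasure (Q x) A = 0"
    by (simp add: finite_measure.emeasure_eq_measure[OF finite_measure_Q])
  with A show "A \<in> null_sets (Q x)"
    by (intro null_setsI) simp_all
qed

end

lemma W_kernel_if_drift_bound:
  assumes "kernel_op Q" "\<And>x. 1 \<le> W x" "W \<in> borel_measurable borel" "0 \<le> \<gamma>" "0 \<le> b"
    and drift: "\<And>x. (\<integral>\<^sup>+y. W y \<partial>Q x) \<le> ennreal (\<gamma> * W x + b * indicator K x)"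
  shows "W_kernel Q W (\<gamma> + b)"
proof
  fix x
  have "\<gamma> * W x + b * indicator K x \<le> (\<gamma> + b) * W x"
    using assms(2)[of x] \<open>0 \<le> b\<close> mult_left_mono[OF assms(2)[of x], of b]
    by (simp add: indicator_def distrib_right)
  then show "(\<integral>\<^sup>+y. W y \<partial>Q x) \<le> ennreal ((\<gamma> + b) * W x)"
    by (rule order_trans[OF drift ennreal_leI])
qed (use assms in simp_all)

locale dominated_W_kernel = W_kernel Q W c
  for Q :: "'a::second_countable_topology \<Rightarrow> 'a measure" and W c +
  fixes \<nu> :: "'a measure"
  assumes finite_measure_\<nu>: "finite_measure \<nu>"
    and sets_\<nu>: "sets \<nu> = sets borel"
    and absolutely_continuous_Q: "\<And>x. absolutely_continuous \<nu> (Q x)"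
begin

lemma Q_eq_density:
  obtains D where "D \<in> borel_measurable borel" "\<And>y. 0 \<le> D y" "Q x = density \<nu> (\<lambda>y. ennreal (D y))"
proof -
  interpret \<nu>: finite_measure \<nu>
    by (rule finite_measure_\<nu>)
  have sets_eq: "sets (Q x) = sets \<nu>"
    using sets_\<nu> by simp
  obtain D where D: "D \<in> borel_measurable \<nu>" "AE y in \<nu>. RN_deriv \<nu> (Q x) y = ennreal (D y)" "\<And>y. 0 \<le> D y"
    using \<nu>.real_RN_deriv[OF finite_measure_Q absolutely_continuous_Q sets_eq] by metis
  have "Q x = density \<nu> (RN_deriv \<nu> (Q x))"
    using \<nu>.density_RN_deriv[OF absolutely_continuous_Q sets_eq] by simp
  also have "\<dots> = density \<nu> (\<lambda>y. ennreal (D y))"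
    using D(1,2) by (intro density_cong) auto
  finally show ?thesis
    using D(1,3) that by (simp add: measurable_cong_sets[OF sets_\<nu> refl])
qed

text \<open>Each \<open>Q x\<close> is \<open>D\<^sub>x \<nu>\<close> with \<open>D\<^sub>x W \<in> L\<^sup>1(\<nu>)\<close>, so \<open>Q f\<^sub>k x\<close> is the pairing of \<open>f\<^sub>k / W\<close> with \<open>D\<^sub>x W\<close>:
  weak-* convergence of \<open>f\<^sub>k / W\<close> in \<open>L\<^sup>\<infinity>(\<nu>)\<close> gives pointwise convergence of \<open>Q f\<^sub>k\<close>.\<close>
lemma kop_pointwise_convergent_subseq:
  fixes f :: "nat \<Rightarrow> 'a \<Rightarrow> real"
  assumes f: "\<And>k. f k \<in> borel_measurable borel" "\<And>k y. \<bar>f k y\<bar> \<le> B * W y"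
  obtains r where "strict_mono r" "\<And>x. convergent (\<lambda>k. kop Q (f (r k)) x)"
proof -
  have g: "(\<lambda>y. f k y / W y) \<in> borel_measurable borel" "\<bar>f k y / W y\<bar> \<le> B" for k y
    using f(1) f(2)[of k y] W_pos[of y]
    by (auto intro: borel_measurable_divide simp: abs_divide pos_divide_le_eq)
  obtain r where r: "strict_mono r"
    and conv: "\<And>u. integrable \<nu> u \<Longrightarrow> convergent (\<lambda>k. \<integral>y. f (r k) y / W y * u y \<partial>\<nu>)"
    using weak_star_convergent_subseq[where g="\<lambda>k y. f k y / W y", OF finite_measure_\<nu> sets_\<nu> g] by blast
  have "convergent (\<lambda>k. kop Q (f (r k)) x)" for x
  proof -
    obtain D where D: "D \<in> borel_measurable borel" "\<And>y. 0 \<le> D y"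
      and Q_x: "Q x = density \<nu> (\<lambda>y. ennreal (D y))"
      using Q_eq_density[of x] by blast
    have [measurable]: "D \<in> borel_measurable \<nu>" "W \<in> borel_measurable \<nu>" "f k \<in> borel_measurable \<nu>" for k
      using D(1) f(1) by (simp_all add: measurable_cong_sets[OF sets_\<nu> refl])
    have integrable_DW: "integrable \<nu> (\<lambda>y. D y * W y)"
      using integrable_W[of x] D(2) unfolding Q_x by (simp add: integrable_density)
    have "(\<lambda>k. kop Q (f (r k)) x) = (\<lambda>k. \<integral>y. f (r k) y / W y * (D y * W y) \<partial>\<nu>)"
    proof
      fix k
      have "kop Q (f (r k)) x = (\<integral>y. D y * f (r k) y \<partial>\<nu>)"
        unfolding kop_def Q_x using D(2) by (simp add: integral_density)
      also have "\<dots> = (\<integral>y. f (r k) y / W y * (D y * W y) \<partial>\<nu>)"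
        using W_pos by (intro Bochner_Integration.integral_cong refl) (simp add: less_imp_neq[symmetric])
      finally show "kop Q (f (r k)) x = (\<integral>y. f (r k) y / W y * (D y * W y) \<partial>\<nu>)" .
    qed
    with conv[OF integrable_DW] show ?thesis
      by simp
  qed
  with r show ?thesis
    by (rule that)
qed

end

lemma dominated_W_kernel_geometric_mixture:
  fixes Q :: "'a::second_countable_topology \<Rightarrow> 'a measure"
  assumes "W_kernel Q W c"
    and \<eta>: "\<And>n. n \<ge> 1 \<Longrightarrow> prob_space (\<eta> n)" "\<And>n. n \<ge> 1 \<Longrightarrow> sets (\<eta> n) = sets borel"
    and irreducible: "\<And>\<phi>. \<phi> \<in> LinfW W \<Longrightarrow> (\<forall>x. 0 \<le> \<phi> x) \<Longrightarrow>
      (\<forall>n\<ge>1. (\<integral>\<^sup>+y. ennreal (\<phi> y) \<partial>\<eta> n) = 0) \<Longrightarrow> \<forall>x. kop Q \<phi> x = 0"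
  shows "dominated_W_kernel Q W c (geometric_mixture \<eta>)"
proof (intro dominated_W_kernel.intro dominated_W_kernel_axioms.intro)
  interpret W_kernel Q W c
    by fact
  show "W_kernel Q W c"
    by fact
  show "finite_measure (geometric_mixture \<eta>)"
    using \<eta> by (rule finite_measure_geometric_mixture)
  show "sets (geometric_mixture \<eta>) = sets borel"
    using \<eta> by (rule sets_geometric_mixture)
  show "absolutely_continuous (geometric_mixture \<eta>) (Q x)" for x
    using \<eta> irreducible by (rule absolutely_continuous_geometric_mixture)
qed

locale regular_lyapunov_kernel = W_kernel Q W c
  for Q :: "'a::{first_countable_topology, t2_space} \<Rightarrow> 'a measure" and W c +
  fixes K :: "nat \<Rightarrow> 'a set" and \<gamma> :: "nat \<Rightarrow> real"
  assumes compact_K: "\<And>m. m \<ge> 1 \<Longrightarrow> compact (K m)"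
    and bounded_W_K: "\<And>m. m \<ge> 1 \<Longrightarrow> bounded (W ` K m)"
    and \<gamma>_tendsto_0: "\<gamma> \<longlonglongrightarrow> 0"
    and kop_W_outside_K: "\<And>m x. m \<ge> 1 \<Longrightarrow> x \<notin> K m \<Longrightarrow> kop Q W x \<le> \<gamma> m * W x"
    and continuous_on_kop_K: "\<And>m \<phi>. m \<ge> 1 \<Longrightarrow> \<phi> \<in> borel_measurable borel \<Longrightarrow> bounded (\<phi> ` K m) \<Longrightarrow>
      continuous_on (K m) (kop Q (\<lambda>y. \<phi> y * indicator (K m) y))"
begin

lemma borel_K [measurable]: "m \<ge> 1 \<Longrightarrow> K m \<in> sets borel"
  using compact_K by (simp add: borel_compact)

lemma abs_kop_le_outside_K:
  assumes "f \<in> borel_measurable borel" "\<And>y. \<bar>f y\<bar> \<le> C * W y" "m \<ge> 1" "x \<notin> K m"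
  shows "\<bar>kop Q f x\<bar> \<le> C * \<gamma> m * W x"
proof -
  have "\<bar>kop Q f x\<bar> \<le> C * kop Q W x"
    using assms(1,2) by (rule abs_kop_le)
  also have "\<dots> \<le> C * (\<gamma> m * W x)"
    using kop_W_outside_K[OF assms(3,4)] nonneg_if_abs_le_W[OF assms(2)] by (rule mult_left_mono)
  finally show ?thesis
    by (simp add: mult.assoc)
qed

lemma abs_kop_le_split_K:
  assumes m: "m \<ge> 1" and f: "f \<in> borel_measurable borel" "\<And>y. \<bar>f y\<bar> \<le> A * W y"
    and a: "0 \<le> a" and f_outside: "\<And>y. y \<notin> K m \<Longrightarrow> \<bar>f y\<bar> \<le> a * W y"
    and \<delta>: "0 \<le> \<delta>" and inside: "\<And>x. x \<in> K m \<Longrightarrow> \<bar>kop Q (\<lambda>y. f y * indicator (K m) y) x\<bar> \<le> \<delta>"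
  shows "\<bar>kop Q f x\<bar> \<le> (\<delta> + a * c + A * \<bar>\<gamma> m\<bar>) * W x"
proof -
  have A: "0 \<le> A"
    by (rule nonneg_if_abs_le_W[OF f(2)])
  have W: "0 \<le> W x"
    using W_pos[of x] by simp
  have total: "(\<delta> + a * c + A * \<bar>\<gamma> m\<bar>) * W x = \<delta> * W x + a * c * W x + A * \<bar>\<gamma> m\<bar> * W x"
    by (simp only: distrib_right)
  have nonneg: "0 \<le> \<delta> * W x" "0 \<le> a * c * W x" "0 \<le> A * \<bar>\<gamma> m\<bar> * W x"
    using \<delta> a c_nonneg A W by simp_all
  have \<gamma>_le: "A * \<gamma> m * W x \<le> A * \<bar>\<gamma> m\<bar> * W x"
    using A W by (intro mult_right_mono mult_left_mono) auto
  show ?thesis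
  proof (cases "x \<in> K m")
    case True
    let ?inside = "\<lambda>y. f y * indicator (K m) y" and ?outside = "\<lambda>y. f y * indicator (- K m) y"
    have measurable: "?inside \<in> borel_measurable borel" "?outside \<in> borel_measurable borel"
      using f(1) borel_K[OF m] by simp_all
    have inside_le: "\<bar>?inside y\<bar> \<le> A * W y" and outside: "\<bar>?outside y\<bar> \<le> a * W y" for y
      using f(2)[of y] f_outside[of y] A a W_pos[of y] by (simp_all add: indicator_def)
    have "(\<lambda>y. ?inside y + ?outside y) = f"
      by (auto simp: fun_eq_iff split: split_indicator)
    then have "kop Q f x = kop Q ?inside x + kop Q ?outside x"
      using kop_add[OF measurable(1) inside_le measurable(2) outside, of x] by simp
    moreover have "\<delta> \<le> \<delta> * W x"
      using \<delta> W_ge_1[of x] mult_left_mono[of 1 "W x" \<delta>] by simp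
    ultimately have "\<bar>kop Q f x\<bar> \<le> \<delta> * W x + a * c * W x"
      using inside[OF True] abs_kop_le_W[OF measurable(2) outside, of x] by linarith
    with total nonneg show ?thesis
      by linarith
  next
    case False
    with total nonneg \<gamma>_le show ?thesis
      using abs_kop_le_outside_K[OF f m False] by linarith
  qed
qed

lemma uniform_limit_kop_indicator_K:
  assumes m: "m \<ge> 1"
    and G: "\<And>k. G k \<in> borel_measurable borel" "\<And>k y. \<bar>G k y\<bar> \<le> C * W y"
    and lim: "\<And>y. (\<lambda>k. G k y) \<longlonglongrightarrow> 0"
  shows "uniform_limit (K m) (\<lambda>k. kop Q (\<lambda>y. G k y * indicator (K m) y)) (\<lambda>_. 0) sequentially"
proof -
  define S where "S N y = (SUP k\<in>{N..}. \<bar>G k y\<bar>)" for N y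
  have C: "0 \<le> C"
    by (rule nonneg_if_abs_le_W[OF G(2)])
  have bdd: "bdd_above ((\<lambda>k. \<bar>G k y\<bar>) ` {N..})" for N y
    using G(2) by (auto intro!: bdd_aboveI[of _ "C * W y"])
  have S_ge: "\<bar>G k y\<bar> \<le> S N y" if "N \<le> k" for N k y
    unfolding S_def using that bdd by (intro cSUP_upper) auto
  have S_le: "S N y \<le> C * W y" for N y
    unfolding S_def using G(2) by (intro cSUP_least) auto
  have S_nonneg: "0 \<le> S N y" for N y
    using S_ge[of N N y] by simp
  have S_measurable: "S N \<in> borel_measurable borel" for N
    unfolding S_def using G(1) bdd by (intro borel_measurable_cSUP) auto
  have S_K: "\<bar>S N y * indicator (K m) y\<bar> \<le> C * W y" for N y
    using S_le[of N y] S_nonneg[of N y] C W_pos[of y] by (simp add: indicator_def)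
  define h where "h N = kop Q (\<lambda>y. S N y * indicator (K m) y)" for N
  show ?thesis
  proof (rule uniform_limit_if_dominated_by_continuous_null[OF compact_K[OF m]])
    obtain Mw where Mw: "\<And>y. y \<in> K m \<Longrightarrow> \<bar>W y\<bar> \<le> Mw"
      using bounded_W_K[OF m] unfolding bounded_iff by auto
    have "\<bar>S N y\<bar> \<le> C * Mw" if "y \<in> K m" for N y
      using S_le[of N y] S_nonneg[of N y] mult_left_mono[OF order_trans[OF abs_ge_self Mw[OF that]] C]
      by simp
    then have "bounded (S N ` K m)" for N
      unfolding bounded_iff by (intro exI[of _ "C * Mw"]) auto
    then show "continuous_on (K m) (h N)" for N
      unfolding h_def using m S_measurable by (intro continuous_on_kop_K)
    show "(\<lambda>N. h N x) \<longlonglongrightarrow> 0" for x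
    proof -
      have "(\<lambda>N. S N y) \<longlonglongrightarrow> 0" for y
        unfolding S_def by (rule tail_SUP_abs_tendsto_zero[OF lim])
      then have "(\<lambda>N. h N x) \<longlonglongrightarrow> kop Q (\<lambda>_. 0) x"
        unfolding h_def using m S_measurable S_K
        by (intro kop_tendsto[where C=C] tendsto_mult_left_zero) simp_all
      then show ?thesis
        by (simp add: kop_def)
    qed
    show "\<bar>kop Q (\<lambda>y. G k y * indicator (K m) y) x\<bar> \<le> h N x" if "N \<le> k" for N k x
      unfolding h_def using m G(1) S_measurable S_K S_ge[OF that]
      by (intro abs_kop_le_kop[where C=C]) (simp_all add: indicator_def)
  qed
qed

text \<open>Outside \<open>K m\<close> the Lyapunov bound makes \<open>Q (D k)\<close> of order \<open>\<gamma> m\<close>; on \<open>K m\<close> local regularity makes the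
  contribution of \<open>K m\<close> converge uniformly.\<close>
lemma normW_kop_tendsto_zero:
  assumes D: "\<And>k. D k \<in> borel_measurable borel" "\<And>k y. \<bar>D k y\<bar> \<le> A * W y"
    and lim: "\<And>y. (\<lambda>k. D k y) \<longlonglongrightarrow> 0"
    and B: "0 \<le> B" and tails: "\<And>k m y. m \<ge> 1 \<Longrightarrow> y \<notin> K m \<Longrightarrow> \<bar>D k y\<bar> \<le> B * \<bar>\<gamma> m\<bar> * W y"
  shows "(\<lambda>k. normW W (kop Q (D k))) \<longlonglongrightarrow> 0"
proof (rule normW_tendsto_zeroI[OF W_pos])
  fix \<epsilon> :: real assume "\<epsilon> > 0"
  have "(\<lambda>m. (A + B * c) * \<bar>\<gamma> m\<bar>) \<longlonglongrightarrow> 0"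
    by (intro tendsto_mult_right_zero tendsto_rabs_zero \<gamma>_tendsto_0)
  from eventually_conj[OF order_tendstoD(2)[OF this half_gt_zero[OF \<open>\<epsilon> > 0\<close>]] eventually_ge_at_top[of 1]]
  obtain m where m: "(A + B * c) * \<bar>\<gamma> m\<bar> < \<epsilon> / 2" "m \<ge> 1"
    unfolding eventually_sequentially by blast
  have "\<forall>\<^sub>F k in sequentially. \<forall>x\<in>K m. dist (kop Q (\<lambda>y. D k y * indicator (K m) y) x) 0 < \<epsilon> / 2"
    by (rule uniform_limitD[OF uniform_limit_kop_indicator_K[OF m(2) D lim]]) (use \<open>\<epsilon> > 0\<close> in simp)
  then show "\<forall>\<^sub>F k in sequentially. \<forall>x. \<bar>kop Q (D k) x\<bar> \<le> \<epsilon> * W x"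
  proof (rule eventually_mono)
    fix k assume inside: "\<forall>x\<in>K m. dist (kop Q (\<lambda>y. D k y * indicator (K m) y) x) 0 < \<epsilon> / 2"
    show "\<forall>x. \<bar>kop Q (D k) x\<bar> \<le> \<epsilon> * W x"
    proof
      fix x
      have "\<bar>kop Q (D k) x\<bar> \<le> (\<epsilon> / 2 + B * \<bar>\<gamma> m\<bar> * c + A * \<bar>\<gamma> m\<bar>) * W x"
      proof (rule abs_kop_le_split_K[OF m(2) D(1) D(2) _ tails[OF m(2)]])
        show "0 \<le> B * \<bar>\<gamma> m\<bar>" "0 \<le> \<epsilon> / 2"
          using B \<open>\<epsilon> > 0\<close> by simp_all
        show "\<bar>kop Q (\<lambda>y. D k y * indicator (K m) y) x'\<bar> \<le> \<epsilon> / 2" if "x' \<in> K m" for x'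
          using inside that by (simp add: dist_real_def less_imp_le)
      qed
      also have "\<dots> \<le> \<epsilon> * W x"
      proof (rule mult_right_mono)
        have "(A + B * c) * \<bar>\<gamma> m\<bar> = A * \<bar>\<gamma> m\<bar> + B * \<bar>\<gamma> m\<bar> * c"
          by (simp add: algebra_simps)
        with m(1) show "\<epsilon> / 2 + B * \<bar>\<gamma> m\<bar> * c + A * \<bar>\<gamma> m\<bar> \<le> \<epsilon>"
          by linarith
      qed (use W_pos[of x] in simp)
      finally show "\<bar>kop Q (D k) x\<bar> \<le> \<epsilon> * W x" .
    qed
  qed
qed

lemma normW_kop_kop_tendsto:
  assumes F: "\<And>k. F k \<in> borel_measurable borel" "\<And>k y. \<bar>F k y\<bar> \<le> C * W y"
    and lim: "\<And>y. (\<lambda>k. F k y) \<longlonglongrightarrow> f y"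
  shows "(\<lambda>k. normW W (kop Q (kop Q (F k)) - kop Q (kop Q f))) \<longlonglongrightarrow> 0"
proof -
  have f_measurable: "f \<in> borel_measurable borel"
    using lim F(1) by (rule borel_measurable_LIMSEQ_real)
  moreover have "\<bar>f y\<bar> \<le> C * W y" for y
    using F(2) by (intro LIMSEQ_le_const2[OF tendsto_rabs[OF lim]]) auto
  ultimately have f: "f \<in> borel_measurable borel" "\<And>y. \<bar>f y\<bar> \<le> C * W y"
    by blast+
  define D where "D k y = kop Q (F k) y - kop Q f y" for k y
  have D_measurable: "D k \<in> borel_measurable borel" for k
    unfolding D_def using borel_measurable_kop[OF F] borel_measurable_kop[OF f] by measurable
  have D_le: "\<bar>D k y\<bar> \<le> (2 * C * c) * W y" for k y
    unfolding D_def using abs_kop_le_W[OF F, of k y] abs_kop_le_W[OF f, of y] by linarith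
  have D_lim: "(\<lambda>k. D k y) \<longlonglongrightarrow> 0" for y
    unfolding D_def using kop_tendsto[OF F f(1) lim] by (simp add: LIM_zero)
  have C: "0 \<le> C"
    by (rule nonneg_if_abs_le_W[OF F(2)])
  have D_tails: "\<bar>D k y\<bar> \<le> (2 * C) * \<bar>\<gamma> m\<bar> * W y" if "m \<ge> 1" "y \<notin> K m" for k m y
  proof -
    have "\<bar>D k y\<bar> \<le> (2 * C) * \<gamma> m * W y"
      unfolding D_def using abs_kop_le_outside_K[OF F(1)[of k] F(2)[of k] that] abs_kop_le_outside_K[OF f that]
      by linarith
    also have "\<dots> \<le> (2 * C) * \<bar>\<gamma> m\<bar> * W y"
      using C W_pos[of y] by (intro mult_right_mono mult_left_mono) auto
    finally show ?thesis .
  qed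
  have "kop Q (kop Q (F k)) - kop Q (kop Q f) = kop Q (D k)" for k
  proof
    fix x
    show "(kop Q (kop Q (F k)) - kop Q (kop Q f)) x = kop Q (D k) x"
      unfolding D_def fun_diff_def
      by (rule kop_diff[OF borel_measurable_kop[OF F] _ borel_measurable_kop[OF f], symmetric])
        (use abs_kop_le_W[OF F] abs_kop_le_W[OF f] in auto)
  qed
  then show ?thesis
    using normW_kop_tendsto_zero[OF D_measurable D_le D_lim _ D_tails] C by simp
qed

end

section \<open>Compactness of the third power\<close>

locale dominated_regular_lyapunov_kernel =
  regular_lyapunov_kernel Q W c K \<gamma> + dominated_W_kernel Q W c \<nu>
  for Q :: "'a::{second_countable_topology, t2_space} \<Rightarrow> 'a measure" and W c K \<gamma> \<nu>
begin

lemma compact_opW_kop3: "compact_opW W (\<lambda>\<phi>. kop Q (kop Q (kop Q \<phi>)))"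
  unfolding compact_opW_def
proof (intro conjI ballI allI impI)
  show "kop Q (kop Q (kop Q \<phi>)) \<in> LinfW W" if "\<phi> \<in> LinfW W" for \<phi>
    using that by (intro kop_LinfW)
next
  fix f :: "nat \<Rightarrow> 'a \<Rightarrow> real" and B :: real
  assume bounded: "\<forall>n. f n \<in> LinfW W \<and> normW W (f n) \<le> B"
  have f_measurable: "f k \<in> borel_measurable borel" for k
    using bounded unfolding LinfW_def by blast
  have f_le: "\<bar>f k y\<bar> \<le> B * W y" for k y
  proof -
    have "\<bar>f k y\<bar> \<le> normW W (f k) * W y"
      using bounded by (intro abs_le_normW[OF W_pos]) blast
    also have "\<dots> \<le> B * W y"
      using bounded W_pos[of y] by (intro mult_right_mono) (auto simp: less_imp_le)
    finally show ?thesis .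
  qed
  obtain r where r: "strict_mono r" "\<And>x. convergent (\<lambda>k. kop Q (f (r k)) x)"
    using kop_pointwise_convergent_subseq[of f B, OF f_measurable f_le] by blast
  define F where "F y = lim (\<lambda>k. kop Q (f (r k)) y)" for y
  have F_lim: "(\<lambda>k. kop Q (f (r k)) y) \<longlonglongrightarrow> F y" for y
    unfolding F_def using r(2) by (rule convergent_LIMSEQ_iff[THEN iffD1])
  have Qf: "kop Q (f k) \<in> borel_measurable borel" "\<bar>kop Q (f k) y\<bar> \<le> B * c * W y" for k y
    by (rule borel_measurable_kop[of "f k" B, OF f_measurable f_le], rule abs_kop_le_W[of "f k" B, OF f_measurable f_le])
  have "F \<in> borel_measurable borel"
    using F_lim Qf(1) by (rule borel_measurable_LIMSEQ_real)
  moreover have "\<bar>F y\<bar> \<le> B * c * W y" for y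
    using Qf(2) by (intro LIMSEQ_le_const2[OF tendsto_rabs[OF F_lim]]) auto
  ultimately have "F \<in> LinfW W"
    unfolding LinfW_def by blast
  show "\<exists>r \<psi>. strict_mono r \<and> \<psi> \<in> LinfW W \<and> (\<lambda>n. normW W (kop Q (kop Q (kop Q (f (r n)))) - \<psi>)) \<longlonglongrightarrow> 0"
  proof (intro exI conjI)
    show "strict_mono r"
      by (rule r(1))
    show "kop Q (kop Q F) \<in> LinfW W"
      by (intro kop_LinfW) fact
    show "(\<lambda>n. normW W (kop Q (kop Q (kop Q (f (r n)))) - kop Q (kop Q F))) \<longlonglongrightarrow> 0"
      using normW_kop_kop_tendsto[of "\<lambda>k. kop Q (f (r k))" "B * c" F, OF Qf F_lim] .
  qed
qed

end

theorem mainTheorem3: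
  fixes Q :: "'a::polish_space \<Rightarrow> 'a measure"
    and K :: "nat \<Rightarrow> 'a set"
    and W :: "'a \<Rightarrow> real"
    and \<gamma> b \<alpha> :: "nat \<Rightarrow> real"
    and \<eta> :: "nat \<Rightarrow> 'a measure"
  assumes kernel: "kernel_op Q"
    and K_compact: "\<And>n. n \<ge> 1 \<Longrightarrow> compact (K n)"
    and K_incr: "\<And>n. n \<ge> 1 \<Longrightarrow> K n \<subseteq> K (Suc n)"
    and K_exhaust: "\<And>C. compact C \<Longrightarrow> \<exists>m\<ge>1. C \<subseteq> K m"
    \<comment> \<open>Assumption 1 (Lyapunov)\<close>
    and W_ge1: "\<And>x. W x \<ge> 1"
    and W_meas: "W \<in> borel_measurable borel"
    and W_bdd: "\<And>C. compact C \<Longrightarrow> bounded (W ` C)"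
    and \<gamma>_pos: "\<And>n. n \<ge> 1 \<Longrightarrow> \<gamma> n > 0"
    and b_pos: "\<And>n. n \<ge> 1 \<Longrightarrow> b n > 0"
    and \<gamma>_lim: "\<gamma> \<longlonglongrightarrow> 0"
    and lyap: "\<And>n x. n \<ge> 1 \<Longrightarrow>
        (\<integral>\<^sup>+ y. ennreal (W y) \<partial>(Q x)) \<le> ennreal (\<gamma> n * W x + b n * indicator (K n) x)"
    \<comment> \<open>Assumption 2 (minorization and irreducibility)\<close>
    and \<eta>_prob: "\<And>n. n \<ge> 1 \<Longrightarrow> prob_space (\<eta> n) \<and> sets (\<eta> n) = sets borel"
    and \<alpha>_pos: "\<And>n. n \<ge> 1 \<Longrightarrow> \<alpha> n > 0"
    and minor: "\<And>n x A. n \<ge> 1 \<Longrightarrow> x \<in> K n \<Longrightarrow> A \<in> sets borel \<Longrightarrow>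
        ennreal (\<alpha> n) * emeasure (\<eta> n) A \<le> emeasure (Q x) A"
    and irred: "\<And>n0 \<phi>. n0 \<ge> 1 \<Longrightarrow> \<phi> \<in> LinfW W \<Longrightarrow> (\<forall>x. \<phi> x \<ge> 0) \<Longrightarrow>
        (\<forall>n\<ge>n0. (\<integral>\<^sup>+ y. ennreal (\<phi> y) \<partial>(\<eta> n)) = 0) \<Longrightarrow>
        (\<forall>x. kop Q \<phi> x = 0)"
    \<comment> \<open>Assumption 3 (local regularity)\<close>
    and regular: "\<And>n \<phi>. n \<ge> 1 \<Longrightarrow> \<phi> \<in> borel_measurable borel \<Longrightarrow> bounded (\<phi> ` K n) \<Longrightarrow>
        continuous_on (K n) (kop Q (\<lambda>y. \<phi> y * indicator (K n) y))"
  shows "compact_opW W (\<lambda>\<phi>. kop Q (kop Q (kop Q \<phi>)))"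
proof -
  have W_kernel: "W_kernel Q W (\<gamma> 1 + b 1)"
    using kernel W_ge1 W_meas \<gamma>_pos[of 1] b_pos[of 1] lyap[OF order_refl]
    by (intro W_kernel_if_drift_bound) auto
  then interpret W_kernel Q W "\<gamma> 1 + b 1" .
  have mixture: "dominated_W_kernel Q W (\<gamma> 1 + b 1) (geometric_mixture \<eta>)"
    using W_kernel \<eta>_prob irred[OF order_refl] by (intro dominated_W_kernel_geometric_mixture) auto
  interpret dominated_regular_lyapunov_kernel Q W "\<gamma> 1 + b 1" K \<gamma> "geometric_mixture \<eta>"
  proof (intro dominated_regular_lyapunov_kernel.intro regular_lyapunov_kernel.intro
      regular_lyapunov_kernel_axioms.intro W_kernel mixture)
    show "kop Q W x \<le> \<gamma> m * W x" if "m \<ge> 1" "x \<notin> K m" for m x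
      using lyap[OF that(1), of x] that \<gamma>_pos[OF that(1)] W_ge1[of x]
      by (intro kop_W_le_if_nn_integral_le) simp_all
  qed (use K_compact W_bdd \<gamma>_lim regular in auto)
  show ?thesis
    by (rule compact_opW_kop3)
qed

end
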